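(* Let $\ell\ge1$ and let $C=(w_1,\dots,w_{2\ell+1})$ be a semi-valid tuple in $\Omega_n$ which is not $(i,2\ell+1)$-consecutive for any $i$. Then there exist $i$ and $k$ with $1\le k\le\ell$ such that $C$ is $(i,k)$-consecutive and both $C_{i,k,-1}$ and $C_{i,k,1}$ are semi-valid.
   Context: $\Omega_n=\{v_0,\dots,v_{n-1}\}$ with cyclic order $v_0<\dots<v_{n-1}<v_0$, indices of $v$ mod $n$. A tuple $C=(w_1,\dots,w_{2\ell+1})$ of distinct vertices is semi-valid if $w_1<w_3<\dots<w_{2\ell+1}<w_2<w_4<\dots<w_{2\ell}<w_1$ in clockwise cyclic order; indices of the $w$'s are mod $2\ell+1$. $C$ is $(i,k)$-consecutive if there is $j$ with $w_{i+2s}=v_{j+s}$ for all $0\le s<k$. In that case, for an integer $m$, $C_{i,k,m}$ is the tuple obtained from $C$ by replacing $w_{i+2s}$ with $v_{j+s+m}$ for $0\le s<k$ and keeping all other entries. *)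

theory Defs
  imports Main
begin

text \<open>Vertices of Omega_n: v_j is encoded as the integer j mod n in {0..<n}; clockwise
  order is increasing order of these labels (cyclically).
  A tuple (w_1,...,w_m), m = 2l+1, is encoded as a function w :: int => int; the entry
  w_q (paper index q, taken mod m) is  w (q mod m).  Only the values on {0..<m} matter.\<close>

definition semi_valid :: "int \<Rightarrow> int \<Rightarrow> (int \<Rightarrow> int) \<Rightarrow> bool" where
  "semi_valid n m w \<longleftrightarrow>
     (\<forall>p\<in>{0..<m}. 0 \<le> w p \<and> w p < n) \<and>
     inj_on w {0..<m} \<and>
     (\<exists>r. \<forall>t\<in>{0..<m-1}.
          w ((1 + 2*(r+t)) mod m) < w ((1 + 2*(r+t+1)) mod m))"

definition consecutive :: "int \<Rightarrow> int \<Rightarrow> (int \<Rightarrow> int) \<Rightarrow> int \<Rightarrow> int \<Rightarrow> bool" where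
  "consecutive n m w i k \<longleftrightarrow>
     (\<exists>j. \<forall>s\<in>{0..<k}. w ((i + 2*s) mod m) = (j + s) mod n)"

text \<open>C_{i,k,d}: entries w_{i+2s} = v_{j+s} (0 <= s < k) are replaced by v_{j+s+d},
  i.e. by (w_{i+2s} + d) mod n; all other entries are kept.\<close>
definition shifted :: "int \<Rightarrow> int \<Rightarrow> (int \<Rightarrow> int) \<Rightarrow> int \<Rightarrow> int \<Rightarrow> int \<Rightarrow> (int \<Rightarrow> int)" where
  "shifted n m w i k d = (\<lambda>p. if \<exists>s\<in>{0..<k}. p = (i + 2*s) mod m
                               then (w p + d) mod n else w p)"

end

theory Submission
  imports Defs
begin

(* Read the entries of C in the order w_1, w_3, ..., w_{2l+1}, w_2, ..., w_{2l} in which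
   semi-validity compares them; this is a sequence f on Z/(2l+1) whose values run clockwise
   around Omega_n.  Call t a break if f(t+1) is not the successor of f(t).  As C is not fully
   consecutive, every 2l consecutive steps contain a break, so some two breaks are at most l
   apart; between them lies a run of k <= l consecutive values, i.e. an (i,k)-consecutive
   block of C.  The values just before and just after a run enclosed by breaks are not
   attained at all, so shifting the run by one vertex in either direction keeps the values
   in clockwise order: C_{i,k,-1} and C_{i,k,1} are semi-valid. *)

definition stride2 :: "int \<Rightarrow> (int \<Rightarrow> int) \<Rightarrow> int \<Rightarrow> int" where
  "stride2 m w t = w ((1 + 2*t) mod m)"

definition cyclically_increasing :: "int \<Rightarrow> int \<Rightarrow> (int \<Rightarrow> int) \<Rightarrow> bool" where
  "cyclically_increasing n m f \<longleftrightarrow>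
     (\<forall>t. 0 \<le> f t \<and> f t < n) \<and> (\<forall>a b. a mod m = b mod m \<longrightarrow> f a = f b) \<and>
     (\<exists>r. \<forall>t\<in>{0..<m-1}. f (r+t) < f (r+t+1))"

lemma chain_less:
  fixes v :: "int \<Rightarrow> int"
  assumes chain: "\<forall>t\<in>{0..<m-1}. v t < v (t+1)" and "0 \<le> x" "x < y" "y < m"
  shows "v x < v y"
  using \<open>x < y\<close> \<open>y < m\<close>
proof (induction y rule: int_gr_induct)
  case base
  then show ?case using chain \<open>0 \<le> x\<close> by simp
next
  case (step y)
  then have "v x < v y" and "v y < v (y + 1)" using chain \<open>0 \<le> x\<close> by auto
  then show ?case by simp
qed

lemma chain_le:
  fixes v :: "int \<Rightarrow> int"
  assumes "\<forall>t\<in>{0..<m-1}. v t < v (t+1)" and "0 \<le> x" "x \<le> y" "y < m"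
  shows "v x \<le> v y"
  using chain_less[OF assms(1), of x y] assms(2-4) by (cases "x = y") auto

lemma cyclically_increasing_range:
  "cyclically_increasing n m f \<Longrightarrow> 0 \<le> f t \<and> f t < n"
  unfolding cyclically_increasing_def by blast

lemma cyclically_increasing_periodic:
  "cyclically_increasing n m f \<Longrightarrow> a mod m = b mod m \<Longrightarrow> f a = f b"
  unfolding cyclically_increasing_def by blast

lemma cyclically_increasing_chainE:
  assumes "cyclically_increasing n m f"
  obtains r where "\<forall>t\<in>{0..<m-1}. f (r+t) < f (r+t+1)"
  using assms unfolding cyclically_increasing_def by blast

lemma cyclically_increasing_window:
  assumes "cyclically_increasing n m f" and "m > 0"
  shows "f a = f (r + (a - r) mod m)"
proof (rule cyclically_increasing_periodic[OF assms(1)])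
  show "a mod m = (r + (a - r) mod m) mod m" by (simp add: mod_add_right_eq)
qed

lemma cyclically_increasing_eq_iff:
  assumes c: "cyclically_increasing n m f" and "m > 0"
  shows "f a = f b \<longleftrightarrow> a mod m = b mod m"
proof
  obtain r where chain: "\<forall>t\<in>{0..<m-1}. f (r+t) < f (r+t+1)"
    using c by (rule cyclically_increasing_chainE)
  let ?x = "(a - r) mod m" and ?y = "(b - r) mod m"
  have chain': "\<forall>t\<in>{0..<m-1}. f (r+t) < f (r+(t+1))" using chain by (simp add: add.assoc)
  assume "f a = f b"
  then have "f (r + ?x) = f (r + ?y)"
    using cyclically_increasing_window[OF assms] by metis
  then have "?x = ?y"
    using chain_less[OF chain', of ?x ?y] chain_less[OF chain', of ?y ?x] \<open>m > 0\<close>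
    by (cases "?x < ?y"; cases "?y < ?x") auto
  then have "((a - r) + r) mod m = ((b - r) + r) mod m" by (rule mod_add_cong) simp
  then show "a mod m = b mod m" by simp
qed (rule cyclically_increasing_periodic[OF c])

lemma cyclically_increasing_add_period:
  "cyclically_increasing n m f \<Longrightarrow> f (t + m) = f t"
  using cyclically_increasing_periodic[of n m f "t + m" t] by simp

lemma chain_rotate1_wrap:
  fixes f :: "int \<Rightarrow> int"
  assumes c: "cyclically_increasing n m f"
    and chain: "\<forall>t\<in>{0..<m-1}. f (r+t) < f (r+(t+1))" and top: "f (r + (m-1)) = n - 1"
  shows "\<forall>t\<in>{0..<m-1}. (f (r + (m-1) + t) + 1) mod n < (f (r + (m-1) + t + 1) + 1) mod n"
proof
  fix t assume t: "t \<in> {0..<m-1}"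
  have range: "0 \<le> f s" for s using cyclically_increasing_range[OF c] by auto
  have below_top: "f (r+s) < n - 1" if "0 \<le> s" "s < m - 1" for s
    using chain_less[OF chain, of s "m-1"] that top by simp
  show "(f (r + (m-1) + t) + 1) mod n < (f (r + (m-1) + t + 1) + 1) mod n"
  proof (cases "t = 0")
    case True
    have "f (r + (m-1) + t + 1) = f r"
      using cyclically_increasing_add_period[OF c, of r] True by (simp add: algebra_simps)
    moreover have "f r < n - 1" using below_top[of 0] t by simp
    ultimately show ?thesis using True top range[of r] by simp
  next
    case False
    have "f (r + (m-1) + t) = f (r + (t-1))" "f (r + (m-1) + t + 1) = f (r + t)"
      using cyclically_increasing_add_period[OF c, of "r + (t-1)"]
        cyclically_increasing_add_period[OF c, of "r + t"] by (simp_all add: algebra_simps)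
    moreover have "f (r + (t-1)) < f (r + t)" "f (r + t) < n - 1"
      using chain[rule_format, of "t-1"] below_top[of t] t False by auto
    ultimately show ?thesis using range[of "r + (t-1)"] by simp
  qed
qed

lemma cyclically_increasing_rotate1:
  assumes c: "cyclically_increasing n m f" and "m > 0"
  shows "cyclically_increasing n m (\<lambda>t. (f t + 1) mod n)"
proof -
  have range: "0 \<le> f t" "f t < n" for t using cyclically_increasing_range[OF c] by auto
  obtain r where chain: "\<forall>t\<in>{0..<m-1}. f (r+t) < f (r+t+1)"
    using c by (rule cyclically_increasing_chainE)
  have chain': "\<forall>t\<in>{0..<m-1}. f (r+t) < f (r+(t+1))" using chain by (simp add: add.assoc)
  have "\<exists>r'. \<forall>t\<in>{0..<m-1}. (f (r'+t) + 1) mod n < (f (r'+t+1) + 1) mod n"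
  proof (cases "f (r + (m-1)) < n - 1")
    case True
    have "(f (r+t) + 1) mod n = f (r+t) + 1" if "0 \<le> t" "t \<le> m - 1" for t
      using chain_le[OF chain', of t "m-1"] that True range[of "r+t"] by simp
    then show ?thesis
      using chain by (intro exI[of _ r]) (auto simp: add.assoc)
  next
    case False
    then have "f (r + (m-1)) = n - 1" using range[of "r + (m-1)"] by simp
    then show ?thesis using chain_rotate1_wrap[OF c chain'] by blast
  qed
  moreover have "\<forall>t. 0 \<le> (f t + 1) mod n \<and> (f t + 1) mod n < n" using range[of 0] by simp
  moreover have "\<forall>a b. a mod m = b mod m \<longrightarrow> (f a + 1) mod n = (f b + 1) mod n"
    using cyclically_increasing_periodic[OF c] by metis
  ultimately show ?thesis unfolding cyclically_increasing_def by blast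
qed

lemma cyclically_increasing_rotate:
  assumes c: "cyclically_increasing n m f" and "m > 0"
  shows "cyclically_increasing n m (\<lambda>t. (f t + c) mod n)"
proof -
  have n: "n > 0" using cyclically_increasing_range[OF c, of 0] by simp
  have "cyclically_increasing n m (\<lambda>t. (f t + int N) mod n)" for N :: nat
  proof (induction N)
    case 0
    then show ?case using c cyclically_increasing_range[OF c] by simp
  next
    case (Suc N)
    have "(\<lambda>t. ((f t + int N) mod n + 1) mod n) = (\<lambda>t. (f t + int (Suc N)) mod n)"
      by (simp add: mod_add_left_eq mod_add_right_eq ac_simps)
    with cyclically_increasing_rotate1[OF Suc \<open>m > 0\<close>] show ?case by simp
  qed
  from this[of "nat (c mod n)"] show ?thesis using n by (simp add: mod_add_right_eq)
qed

lemma cyclically_increasing_chain_from_min: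
  assumes c: "cyclically_increasing n m f" and "m > 0" and min: "\<forall>b. f a \<le> f b"
  shows "\<forall>t\<in>{0..<m-1}. f (a+t) < f (a+t+1)"
proof -
  obtain r where chain: "\<forall>t\<in>{0..<m-1}. f (r+t) < f (r+t+1)"
    using c by (rule cyclically_increasing_chainE)
  have chain': "\<forall>t\<in>{0..<m-1}. f (r+t) < f (r+(t+1))" using chain by (simp add: add.assoc)
  have "(a - r) mod m = 0"
  proof (rule ccontr)
    assume "(a - r) mod m \<noteq> 0"
    then have "f (r + 0) < f (r + (a - r) mod m)"
      using chain_less[OF chain', of 0 "(a - r) mod m"] \<open>m > 0\<close>
      by (simp add: order_le_neq_trans)
    then show False
      using min cyclically_increasing_window[OF c \<open>m > 0\<close>, of a r] by (metis leD)
  qed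
  then have "m dvd (a + t) - (r + t)" for t by (simp add: dvd_eq_mod_eq_0)
  then have "f (a + t) = f (r + t)" for t
    by (intro cyclically_increasing_periodic[OF c] mod_eq_dvd_iff[THEN iffD2])
  then show ?thesis using chain by (simp add: add.assoc)
qed

lemma cyclically_increasing_successor:
  assumes c: "cyclically_increasing n m f" and "m > 0" and succ: "f b = (f a + 1) mod n"
  shows "b mod m = (a + 1) mod m"
proof -
  \<comment> \<open>After rotating the values so that f b becomes 0, the chain starts at b and ends at a,
    which carries the largest possible value n - 1.\<close>
  define g where "g t = (f t + - f b) mod n" for t
  have cg: "cyclically_increasing n m g"
    unfolding g_def using cyclically_increasing_rotate[OF c \<open>m > 0\<close>] .
  have n: "n > 0" using cyclically_increasing_range[OF c, of 0] by simp
  have "g b \<le> g x" for x using cyclically_increasing_range[OF cg, of x] by (simp add: g_def)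
  then have chain: "\<forall>t\<in>{0..<m-1}. g (b+t) < g (b+(t+1))"
    using cyclically_increasing_chain_from_min[OF cg \<open>m > 0\<close>] by (simp add: add.assoc)
  have "g a = n - 1"
    using n by (simp add: g_def succ mod_diff_right_eq zmod_minus1)
  moreover have "g a = g (b + (a - b) mod m)"
    by (rule cyclically_increasing_window[OF cg \<open>m > 0\<close>])
  moreover have "g (b + (a - b) mod m) \<le> g (b + (m - 1))"
    using chain_le[OF chain, of "(a - b) mod m" "m - 1"] \<open>m > 0\<close> by simp
  ultimately have "g (b + (m - 1)) = g a"
    using cyclically_increasing_range[OF cg, of "b + (m - 1)"] by simp
  then have "(b + (m - 1)) mod m = a mod m"
    using cyclically_increasing_eq_iff[OF cg \<open>m > 0\<close>] by blast
  then have "(b + (m - 1) + 1) mod m = (a + 1) mod m" by (metis mod_add_left_eq)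
  then show ?thesis by simp
qed

lemma cyclically_increasing_break:
  assumes c: "cyclically_increasing n m f" and "m > 0" and break: "f (t+1) \<noteq> (f t + 1) mod n"
  shows "f b \<noteq> (f t + 1) mod n" and "f b \<noteq> (f (t+1) - 1) mod n"
proof
  assume "f b = (f t + 1) mod n"
  then have "b mod m = (t + 1) mod m"
    using cyclically_increasing_successor[OF c \<open>m > 0\<close>] by blast
  then show False using break \<open>f b = _\<close> cyclically_increasing_periodic[OF c] by metis
next
  show "f b \<noteq> (f (t+1) - 1) mod n"
  proof
    assume "f b = (f (t+1) - 1) mod n"
    then have "f (t+1) = (f b + 1) mod n"
      using cyclically_increasing_range[OF c, of "t+1"] by (simp add: mod_add_left_eq)
    then have "(t + 1) mod m = (b + 1) mod m"
      using cyclically_increasing_successor[OF c \<open>m > 0\<close>] by blast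
    then have "t mod m = b mod m" by (metis add_diff_cancel_right' mod_diff_left_eq)
    then show False
      using break \<open>f (t+1) = _\<close> cyclically_increasing_periodic[OF c] by metis
  qed
qed

lemma run_of_successor_steps:
  fixes f :: "int \<Rightarrow> int"
  assumes steps: "\<forall>s\<in>{0..<k-1}. f (t+s+1) = (f (t+s) + 1) mod n"
    and "0 \<le> f t" "f t < n" and "s \<in> {0..<k}"
  shows "f (t+s) = (f t + s) mod n"
proof -
  have "0 \<le> s" "s < k" using \<open>s \<in> {0..<k}\<close> by auto
  then show ?thesis
  proof (induction s rule: int_ge_induct)
    case base
    then show ?case using assms(2,3) by simp
  next
    case (step s)
    then have "f (t+s+1) = (f (t+s) + 1) mod n" using steps by simp
    also have "\<dots> = (f t + s + 1) mod n" using step by (simp add: mod_add_left_eq)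
    finally show ?case by (simp add: add.assoc)
  qed
qed

(* Two marks in a period of length 2l + 1 cut it into two arcs, one of length at most l. *)
lemma periodic_marks_close:
  fixes G :: "int \<Rightarrow> bool" and l :: int
  assumes periodic: "\<forall>t. G (t + (2*l+1)) = G t"
    and dense: "\<forall>t. \<exists>s\<in>{0..<2*l}. G (t+s)"
  obtains a k where "1 \<le> k" "k \<le> l" "G a" "G (a + k)" "\<forall>s\<in>{1..<k}. \<not> G (a + s)"
proof -
  obtain a0 where "G a0" using dense by fastforce
  define X where "X = {t \<in> {a0<..<a0+2*l+1}. G t}"
  have "finite X" unfolding X_def by (rule finite_subset[of _ "{a0<..<a0+2*l+1}"]) auto
  moreover have "X \<noteq> {}"
  proof -
    obtain s where "s \<in> {0..<2*l}" "G (a0 + 1 + s)" using dense by blast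
    then have "a0 + 1 + s \<in> X" unfolding X_def by auto
    then show ?thesis by blast
  qed
  ultimately have "Min X \<in> X" "Max X \<in> X" "\<forall>t\<in>X. Min X \<le> t \<and> t \<le> Max X" by auto
  then obtain b c where b: "b \<in> {a0<..<a0+2*l+1}" "G b" and c: "c \<in> {a0<..<a0+2*l+1}" "G c"
    and between: "\<And>t. t \<in> {a0<..<a0+2*l+1} \<Longrightarrow> G t \<Longrightarrow> b \<le> t \<and> t \<le> c"
    unfolding X_def by blast
  show thesis
  proof (cases "b - a0 \<le> l")
    case True
    have "\<not> G (a0 + s)" if "s \<in> {1..<b - a0}" for s
      using between[of "a0 + s"] b that by auto
    then show thesis using that[of "b - a0" a0] True \<open>G a0\<close> b by auto
  next
    case False
    have "\<not> G (c + s)" if "s \<in> {1..<a0 + 2*l + 1 - c}" for s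
      using between[of "c + s"] c that by auto
    moreover have "G (a0 + 2*l + 1)" using periodic \<open>G a0\<close> by (metis add.assoc)
    moreover have "b \<le> c" using between b by blast
    ultimately show thesis using that[of "a0 + 2*l + 1 - c" c] False b c by auto
  qed
qed

lemma cyclically_increasing_short_maximal_run:
  assumes c: "cyclically_increasing n (2*l+1) f" and "l \<ge> 0"
    and no_full_run: "\<forall>t. \<not> (\<forall>s\<in>{0..<2*l+1}. f (t+s) = (f t + s) mod n)"
  obtains t0 k where "1 \<le> k" "k \<le> l" "\<forall>s\<in>{0..<k}. f (t0+s) = (f t0 + s) mod n"
    "\<forall>b. f b \<noteq> (f t0 - 1) mod n" "\<forall>b. f b \<noteq> (f t0 + k) mod n"
proof -
  let ?m = "2*l+1"
  have "?m > 0" using \<open>l \<ge> 0\<close> by simp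
  have range: "0 \<le> f t" "f t < n" for t using cyclically_increasing_range[OF c] by auto
  define G where "G t \<longleftrightarrow> f (t+1) \<noteq> (f t + 1) mod n" for t
  have "\<forall>t. G (t + ?m) = G t"
    using cyclically_increasing_add_period[OF c] unfolding G_def by (metis add.commute add.left_commute)
  moreover have "\<forall>t. \<exists>s\<in>{0..<2*l}. G (t+s)"
  proof (rule ccontr)
    assume "\<not> ?thesis"
    then obtain t where "\<forall>s\<in>{0..<?m-1}. f (t+s+1) = (f (t+s) + 1) mod n"
      unfolding G_def by auto
    then show False using no_full_run run_of_successor_steps[of ?m f t n] range by blast
  qed
  ultimately obtain a k where k: "1 \<le> k" "k \<le> l" and "G a" "G (a + k)"
    and steps: "\<forall>s\<in>{1..<k}. \<not> G (a + s)"
    by (rule periodic_marks_close)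
  have run: "\<forall>s\<in>{0..<k}. f (a+1+s) = (f (a+1) + s) mod n"
  proof
    fix s assume "s \<in> {0..<k}"
    have "\<forall>s\<in>{0..<k-1}. f (a+1+s+1) = (f (a+1+s) + 1) mod n"
    proof
      fix s assume "s \<in> {0..<k-1}"
      then show "f (a+1+s+1) = (f (a+1+s) + 1) mod n"
        using steps[rule_format, of "s+1"] unfolding G_def by (simp add: ac_simps)
    qed
    then show "f (a+1+s) = (f (a+1) + s) mod n"
      using run_of_successor_steps range \<open>s \<in> {0..<k}\<close> by blast
  qed
  have "f (a + k) = (f (a+1) + (k-1)) mod n" using run[rule_format, of "k-1"] k by simp
  then have "(f (a + k) + 1) mod n = (f (a+1) + k) mod n" by (simp add: mod_add_left_eq)
  then have "\<forall>b. f b \<noteq> (f (a+1) + k) mod n"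
    using cyclically_increasing_break(1)[OF c \<open>?m > 0\<close>] \<open>G (a + k)\<close> unfolding G_def by metis
  moreover have "\<forall>b. f b \<noteq> (f (a+1) - 1) mod n"
    using cyclically_increasing_break(2)[OF c \<open>?m > 0\<close>] \<open>G a\<close> unfolding G_def by blast
  ultimately show thesis using that[of k "a+1"] k run by blast
qed

lemma mod_add_right_inj:
  fixes x y c n :: int
  assumes "0 \<le> x" "x < n" "0 \<le> y" "y < n"
  shows "(x + c) mod n = (y + c) mod n \<longleftrightarrow> x = y"
proof
  assume "(x + c) mod n = (y + c) mod n"
  then have "(x + c + - c) mod n = (y + c + - c) mod n" by (rule mod_add_cong) simp
  then show "x = y" using assms by simp
qed simp

lemma rotate_unattained:
  fixes f :: "'a \<Rightarrow> int"
  assumes range: "\<forall>t. 0 \<le> f t \<and> f t < n" and unattained: "\<forall>b. f b \<noteq> x mod n"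
  shows "(f b + c) mod n \<noteq> (x + c) mod n"
proof
  have "n > 0" using range by (metis le_less_trans)
  assume "(f b + c) mod n = (x + c) mod n"
  then have "(f b + c) mod n = (x mod n + c) mod n" by (simp add: mod_add_left_eq)
  then have "f b = x mod n" using mod_add_right_inj range \<open>n > 0\<close> by simp
  then show False using unattained by blast
qed

lemma mod_add_rotate_back:
  fixes x c n e :: int
  shows "((x + c) mod n + e + - c) mod n = (x + e) mod n"
proof -
  have "((x + c) mod n + e + - c) mod n = ((x + c) mod n + (e - c)) mod n" by (simp add: add_diff_eq)
  also have "\<dots> = (x + e) mod n" by (simp add: mod_add_left_eq)
  finally show ?thesis .
qed

lemma chain_shift_initial_segment:
  fixes v :: "int \<Rightarrow> int"
  assumes chain: "\<forall>x\<in>{0..<m-1}. v x < v (x+1)"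
    and block: "\<forall>x\<in>{0..<k}. v x = x + 1" and gap: "k + 2 \<le> v k" and d: "\<bar>d\<bar> \<le> 1"
  shows "\<forall>x\<in>{0..<m-1}.
    (if x < k then v x + d else v x) < (if x + 1 < k then v (x+1) + d else v (x+1))"
proof
  fix x assume x: "x \<in> {0..<m-1}"
  consider "x + 1 < k" | "x + 1 = k" | "k \<le> x" by linarith
  then show "(if x < k then v x + d else v x) < (if x + 1 < k then v (x+1) + d else v (x+1))"
  proof cases
    case 1
    then show ?thesis using block[rule_format, of x] block[rule_format, of "x+1"] x by simp
  next
    case 2
    then show ?thesis using block[rule_format, of x] x gap d by (simp add: abs_le_iff)
  next
    case 3
    then show ?thesis using chain x by simp
  qed
qed

lemma cyclically_increasing_shift_initial_block:
  assumes c: "cyclically_increasing n m f" and "m > 0" and k: "1 \<le> k" "k < m"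
    and block: "\<forall>s\<in>{0..<k}. f (t0+s) = s + 1"
    and no_zero: "\<forall>b. f b \<noteq> 0" and no_succ: "\<forall>b. f b \<noteq> k + 1" and d: "\<bar>d\<bar> \<le> 1"
  shows "cyclically_increasing n m (\<lambda>t. if (t - t0) mod m < k then f t + d else f t)"
    (is "cyclically_increasing n m ?g")
proof -
  have range: "0 \<le> f t" "f t < n" for t using cyclically_increasing_range[OF c] by auto
  have "f t0 = 1" using block[rule_format, of 0] k by simp
  then have "\<forall>b. f t0 \<le> f b" using range no_zero by (metis int_one_le_iff_zero_less order_le_less)
  then have chain: "\<forall>x\<in>{0..<m-1}. f (t0+x) < f (t0+(x+1))"
    using cyclically_increasing_chain_from_min[OF c \<open>m > 0\<close>] by (simp add: add.assoc)
  have "f (t0 + (k-1)) = k" using block[rule_format, of "k-1"] k by simp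
  moreover have "f (t0 + (k-1)) < f (t0 + k)" using chain[rule_format, of "k-1"] k by simp
  ultimately have gap: "k + 2 \<le> f (t0 + k)" using no_succ[rule_format, of "t0 + k"] by arith
  have "\<forall>x\<in>{0..<m-1}. ?g (t0+x) < ?g (t0+x+1)"
  proof
    fix x assume x: "x \<in> {0..<m-1}"
    then have "(t0 + x - t0) mod m = x" "(t0 + x + 1 - t0) mod m = x + 1" by simp_all
    then have "?g (t0+x) = (if x < k then f (t0+x) + d else f (t0+x))"
      and "?g (t0+x+1) = (if x + 1 < k then f (t0+(x+1)) + d else f (t0+(x+1)))"
      by (simp_all add: add.assoc)
    then show "?g (t0+x) < ?g (t0+x+1)"
      using chain_shift_initial_segment[OF chain block gap d, rule_format, OF x] by (simp only:)
  qed
  moreover have "0 \<le> ?g t \<and> ?g t < n" for t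
  proof (cases "(t - t0) mod m < k")
    case True
    then have "f t = (t - t0) mod m + 1"
      using block cyclically_increasing_window[OF c \<open>m > 0\<close>, of t t0] \<open>m > 0\<close> by simp
    moreover have "0 \<le> (t - t0) mod m" using \<open>m > 0\<close> by simp
    ultimately show ?thesis using True d gap range[of "t0 + k"] by (simp add: abs_le_iff)
  qed (simp add: range)
  moreover have "?g a = ?g b" if ab: "a mod m = b mod m" for a b
  proof -
    have "(a - t0) mod m = (b - t0) mod m" using ab by (rule mod_diff_cong) simp
    then show ?thesis using cyclically_increasing_periodic[OF c ab] by simp
  qed
  ultimately show ?thesis unfolding cyclically_increasing_def by blast
qed

lemma cyclically_increasing_shift_block:
  assumes c: "cyclically_increasing n m f" and "m > 0" and k: "1 \<le> k" "k < m"
    and block: "\<forall>s\<in>{0..<k}. f (t0+s) = (f t0 + s) mod n"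
    and before: "\<forall>b. f b \<noteq> (f t0 - 1) mod n" and after: "\<forall>b. f b \<noteq> (f t0 + k) mod n"
    and d: "\<bar>d\<bar> \<le> 1"
  shows "cyclically_increasing n m (\<lambda>t. if (t - t0) mod m < k then (f t + d) mod n else f t)"
proof -
  \<comment> \<open>Rotate the values so that the block becomes 1, ..., k with 0 and k + 1 unattained.\<close>
  define c where "c = 1 - f t0"
  define f' where "f' t = (f t + c) mod n" for t
  have c': "cyclically_increasing n m f'"
    unfolding f'_def by (rule cyclically_increasing_rotate[OF c \<open>m > 0\<close>])
  have range: "\<forall>t. 0 \<le> f t \<and> f t < n" using cyclically_increasing_range[OF c] by blast
  then have "n > 0" by (metis le_less_trans)
  have "k < n"
  proof (rule ccontr)
    assume "\<not> k < n"
    then have "f (t0 + (n - 1)) = (f t0 - 1 + n) mod n"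
      using block[rule_format, of "n - 1"] \<open>n > 0\<close> by (simp add: algebra_simps)
    then show False using before by simp
  qed
  have "f' (t0+s) = s + 1" if "s \<in> {0..<k}" for s
  proof -
    have "f' (t0+s) = (f t0 + s + c) mod n" using block that by (simp add: f'_def mod_add_left_eq)
    then show ?thesis using that \<open>k < n\<close> by (simp add: c_def)
  qed
  moreover have "f' b \<noteq> 0" for b
    using rotate_unattained[OF range before, of b c] by (simp add: f'_def c_def)
  moreover have "f' b \<noteq> k + 1" for b
    using rotate_unattained[OF range after, of b c] cyclically_increasing_range[OF c', of b]
    by (cases "k + 1 < n") (auto simp: f'_def c_def)
  ultimately have "cyclically_increasing n m (\<lambda>t. if (t - t0) mod m < k then f' t + d else f' t)"
    using cyclically_increasing_shift_initial_block[OF c' \<open>m > 0\<close> k] d by blast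
  then have "cyclically_increasing n m
      (\<lambda>t. ((if (t - t0) mod m < k then f' t + d else f' t) + - c) mod n)"
    by (rule cyclically_increasing_rotate[OF _ \<open>m > 0\<close>])
  moreover have "((if (t - t0) mod m < k then f' t + d else f' t) + - c) mod n
      = (if (t - t0) mod m < k then (f t + d) mod n else f t)" for t
    using mod_add_rotate_back[of "f t" c n d] mod_add_rotate_back[of "f t" c n 0] range
    by (simp add: f'_def)
  ultimately show ?thesis by simp
qed

lemma odd_double_mod_eq_iff:
  fixes m a b :: int
  assumes "odd m"
  shows "(1 + 2*a) mod m = (1 + 2*b) mod m \<longleftrightarrow> a mod m = b mod m"
proof -
  have "(1 + 2*a) - (1 + 2*b) = (a - b) * 2" by simp
  then have "(1 + 2*a) mod m = (1 + 2*b) mod m \<longleftrightarrow> m dvd (a - b) * 2"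
    by (simp only: mod_eq_dvd_iff)
  also have "\<dots> \<longleftrightarrow> m dvd a - b" using assms by (intro coprime_dvd_mult_left_iff) simp
  also have "\<dots> \<longleftrightarrow> a mod m = b mod m" by (simp only: mod_eq_dvd_iff)
  finally show ?thesis .
qed

lemma odd_double_mod_surj:
  fixes m p :: int
  assumes "odd m"
  obtains t where "(1 + 2*t) mod m = p mod m"
proof -
  obtain l where m: "m = 2*l + 1" using assms by (rule oddE)
  have "1 + 2*((p - 1)*(l + 1)) = p + (p - 1)*m" by (simp add: m algebra_simps)
  then have "(1 + 2*((p - 1)*(l + 1))) mod m = p mod m" by simp
  then show thesis by (rule that)
qed

lemma semi_valid_iff_stride2:
  assumes "odd m" "m > 0"
  shows "semi_valid n m w \<longleftrightarrow> cyclically_increasing n m (stride2 m w)"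
proof
  assume sv: "semi_valid n m w"
  have "(1 + 2*t) mod m \<in> {0..<m}" for t using \<open>m > 0\<close> by simp
  then have "\<forall>t. 0 \<le> stride2 m w t \<and> stride2 m w t < n"
    using sv unfolding semi_valid_def stride2_def by blast
  moreover have "\<forall>a b. a mod m = b mod m \<longrightarrow> stride2 m w a = stride2 m w b"
    unfolding stride2_def using odd_double_mod_eq_iff[OF \<open>odd m\<close>] by metis
  ultimately show "cyclically_increasing n m (stride2 m w)"
    using sv unfolding cyclically_increasing_def semi_valid_def stride2_def by blast
next
  assume c: "cyclically_increasing n m (stride2 m w)"
  have position: "\<exists>t. p = (1 + 2*t) mod m" if "p \<in> {0..<m}" for p
    using odd_double_mod_surj[OF \<open>odd m\<close>, of p] that by (metis atLeastLessThan_iff mod_pos_pos_trivial)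
  have "\<forall>p\<in>{0..<m}. 0 \<le> w p \<and> w p < n"
    using position cyclically_increasing_range[OF c] unfolding stride2_def by metis
  moreover have "inj_on w {0..<m}"
  proof (rule inj_onI)
    fix p q assume "p \<in> {0..<m}" "q \<in> {0..<m}" "w p = w q"
    then obtain x y where p: "p = (1 + 2*x) mod m" and q: "q = (1 + 2*y) mod m"
      using position by blast
    then have "stride2 m w x = stride2 m w y" using \<open>w p = w q\<close> by (simp add: stride2_def)
    then have "x mod m = y mod m" using cyclically_increasing_eq_iff[OF c \<open>m > 0\<close>] by blast
    then show "p = q" using p q odd_double_mod_eq_iff[OF \<open>odd m\<close>] by blast
  qed
  ultimately show "semi_valid n m w"
    using c unfolding cyclically_increasing_def semi_valid_def stride2_def by blast
qed

lemma consecutive_iff_stride2: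
  "consecutive n m w (1 + 2*t) k \<longleftrightarrow> (\<exists>j. \<forall>s\<in>{0..<k}. stride2 m w (t+s) = (j + s) mod n)"
  unfolding consecutive_def stride2_def by (simp add: distrib_left add.assoc)

lemma stride2_shifted:
  assumes "odd m" "m > 0" "k \<le> m"
  shows "stride2 m (shifted n m w (1 + 2*t0) k d) t =
    (if (t - t0) mod m < k then (stride2 m w t + d) mod n else stride2 m w t)"
proof -
  have hit: "(1 + 2*t) mod m = (1 + 2*t0 + 2*s) mod m \<longleftrightarrow> (t - t0) mod m = s"
    if "s \<in> {0..<k}" for s
  proof -
    have "(1 + 2*t) mod m = (1 + 2*t0 + 2*s) mod m \<longleftrightarrow> t mod m = (t0 + s) mod m"
      using odd_double_mod_eq_iff[OF \<open>odd m\<close>, of t "t0 + s"] by (simp add: distrib_left add.assoc)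
    also have "\<dots> \<longleftrightarrow> (t - t0) mod m = s mod m" by (simp only: mod_eq_dvd_iff diff_diff_eq)
    also have "s mod m = s" using that assms by simp
    finally show ?thesis .
  qed
  have "(\<exists>s\<in>{0..<k}. (1 + 2*t) mod m = (1 + 2*t0 + 2*s) mod m) \<longleftrightarrow> (t - t0) mod m < k"
    using hit \<open>m > 0\<close> by (auto intro: bexI[of _ "(t - t0) mod m"])
  then show ?thesis unfolding stride2_def shifted_def by simp
qed

theorem lemma3p8:
  fixes l :: nat and n :: int and w :: "int \<Rightarrow> int"
  assumes "l \<ge> 1"
    and "semi_valid n (2 * int l + 1) w"
    and "\<forall>i. \<not> consecutive n (2 * int l + 1) w i (2 * int l + 1)"
  shows "\<exists>i k. 1 \<le> k \<and> k \<le> int l \<and> consecutive n (2 * int l + 1) w i k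
           \<and> semi_valid n (2 * int l + 1) (shifted n (2 * int l + 1) w i k (-1))
           \<and> semi_valid n (2 * int l + 1) (shifted n (2 * int l + 1) w i k 1)"
proof -
  define m where "m = 2 * int l + 1"
  define f where "f = stride2 m w"
  have m: "odd m" "m > 0" by (simp_all add: m_def)
  have c: "cyclically_increasing n m f"
    using assms(2) semi_valid_iff_stride2[OF m] by (simp add: f_def m_def)
  have "\<forall>t. \<not> (\<forall>s\<in>{0..<2 * int l + 1}. f (t+s) = (f t + s) mod n)"
    using assms(3) consecutive_iff_stride2 unfolding f_def m_def by blast
  then obtain t0 k where k: "1 \<le> k" "k \<le> int l"
    and run: "\<forall>s\<in>{0..<k}. f (t0+s) = (f t0 + s) mod n"
    and maximal: "\<forall>b. f b \<noteq> (f t0 - 1) mod n" "\<forall>b. f b \<noteq> (f t0 + k) mod n"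
    by (rule cyclically_increasing_short_maximal_run[OF c[unfolded m_def] of_nat_0_le_iff])
  have "k < m" using k by (simp add: m_def)
  have "consecutive n m w (1 + 2*t0) k"
    using run consecutive_iff_stride2 unfolding f_def by blast
  moreover have "semi_valid n m (shifted n m w (1 + 2*t0) k d)" if "d \<in> {-1, 1}" for d
  proof -
    have "cyclically_increasing n m (\<lambda>t. if (t - t0) mod m < k then (f t + d) mod n else f t)"
      using cyclically_increasing_shift_block[OF c \<open>m > 0\<close> \<open>1 \<le> k\<close> \<open>k < m\<close> run maximal] that
      by auto
    moreover have "stride2 m (shifted n m w (1 + 2*t0) k d)
        = (\<lambda>t. if (t - t0) mod m < k then (f t + d) mod n else f t)"
      using stride2_shifted[OF m] \<open>k < m\<close> unfolding f_def by (intro ext) simp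
    ultimately show ?thesis using semi_valid_iff_stride2[OF m] by simp
  qed
  ultimately show ?thesis using k unfolding m_def by blast
qed

end
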